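(* Let $p$ be a prime, let $D$ be a probability distribution on $\mathbb{F}_p$, let $f_0,f_1,\dots,f_k:\mathbb{F}_p^n\to\mathbb{F}_p$, let $F:\mathbb{F}_p^k\to\mathbb{F}_p$ and let $\epsilon>0$. If $|\mathrm{bias}_{t,D}(f_0+a_1f_1+\dots+a_kf_k)|\le p^{-k}\epsilon$ for each $t\in\mathbb{F}_p^*$ and all $(a_1,\dots,a_k)\in\mathbb{F}_p^k$, then $|\mathrm{bias}_{t,D}(f_0+F\circ(f_1,\dots,f_k))|\le\epsilon$ for each $t\in\mathbb{F}_p^*$.
   Context: $\omega_p=\exp(2\pi i/p)$. For $f:\mathbb{F}_p^n\to\mathbb{F}_p$, $\mathrm{bias}_{t,D}f=\mathbb{E}_{x\sim D^n}\omega_p^{tf(x)}$, where $D^n$ is the product distribution with independent coordinates distributed according to $D$. *)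

theory Defs
  imports "HOL-Library.FuncSet" "HOL-Computational_Algebra.Primes" Complex_Main
begin

text \<open>Elements of F_p are represented by the naturals 0..p-1; F_p^n by functions
  in PiE {..<n} (\<lambda>_. {..<p}).\<close>

definition omega :: "nat \<Rightarrow> complex" where
  "omega p = cis (2 * pi / real p)"

definition is_distr :: "nat \<Rightarrow> (nat \<Rightarrow> real) \<Rightarrow> bool" where
  "is_distr p D \<longleftrightarrow> (\<forall>a<p. 0 \<le> D a) \<and> (\<Sum>a<p. D a) = 1"

definition Fpn :: "nat \<Rightarrow> nat \<Rightarrow> (nat \<Rightarrow> nat) set" where
  "Fpn p n = PiE {..<n} (\<lambda>_. {..<p})"

definition bias :: "nat \<Rightarrow> nat \<Rightarrow> nat \<Rightarrow> (nat \<Rightarrow> real) \<Rightarrow> ((nat \<Rightarrow> nat) \<Rightarrow> nat) \<Rightarrow> complex" where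
  "bias p n t D f = (\<Sum>x\<in>Fpn p n. complex_of_real (\<Prod>i<n. D (x i)) * omega p ^ (t * f x))"

end

theory Submission
  imports Defs "HOL-Analysis.Analysis" "HOL-Number_Theory.Cong"
begin

text \<open>For \<open>t\<close> coprime to \<open>p\<close> the characters \<open>y \<mapsto> \<omega>^(t a\<cdot>y)\<close> of \<open>F_p^k\<close> are
  orthogonal, so the indicator of \<open>y = z\<close> is \<open>p^-k \<Sum>_a \<omega>^(t a\<cdot>(y - z))\<close>. Hence
  \<open>\<omega>^(t F y)\<close> is a combination of the characters \<open>\<omega>^(t a\<cdot>y)\<close>, one term for each pair
  \<open>(z, a)\<close>, with coefficients of modulus \<open>p^-k\<close>. Substituting \<open>y = (f_1 x, \<dots>, f_k x)\<close>
  and averaging over \<open>x\<close> writes the bias of \<open>f_0 + F \<circ> (f_1, \<dots>, f_k)\<close> as the same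
  combination of the biases of \<open>f_0 + \<Sum> a_i f_i\<close>, and the triangle inequality bounds it by
  \<open>p^2k \<cdot> p^-k \<cdot> p^-k \<epsilon> = \<epsilon>\<close>.\<close>

lemma omega_power_eq_exp:
  "omega p ^ j = exp (2 * of_real pi * \<i> * of_nat j / of_nat p)"
proof -
  have "omega p ^ j = cis (real j * (2 * pi / real p))"
    by (simp add: omega_def Complex.DeMoivre)
  then show ?thesis
    by (simp add: cis_conv_exp mult_ac)
qed

lemma omega_power_eq_iff:
  assumes "0 < p"
  shows "omega p ^ a = omega p ^ b \<longleftrightarrow> [a = b] (mod p)"
  using complex_root_unity_eq[of p a b] assms by (simp add: omega_power_eq_exp cong_def)

lemma omega_power_mult_mod:
  assumes "0 < p"
  shows "omega p ^ (t * (m mod p)) = omega p ^ (t * m)"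
  using assms by (simp add: omega_power_eq_iff cong_def mod_mult_right_eq)

lemma norm_omega [simp]: "norm (omega p) = 1"
  by (simp add: omega_def)

lemma omega_nonzero [simp]: "omega p \<noteq> 0"
  using norm_omega[of p] by (metis norm_zero zero_neq_one)

lemma sum_power_omega_ratio:
  assumes "0 < p" "coprime t p"
  shows "(\<Sum>j<p. (omega p ^ (t * y) / omega p ^ (t * z)) ^ j)
           = (if [y = z] (mod p) then of_nat p else 0)"
proof -
  let ?u = "omega p ^ (t * y) / omega p ^ (t * z)"
  have "?u = 1 \<longleftrightarrow> [y = z] (mod p)"
    using assms by (simp add: omega_power_eq_iff cong_mult_lcancel_nat)
  moreover have "?u ^ p = 1"
  proof -
    have "omega p ^ p = 1"
      using omega_power_mult_mod[OF assms(1), of 1 p] by simp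
    moreover have "?u ^ p = (omega p ^ p) ^ (t * y) / (omega p ^ p) ^ (t * z)"
      by (simp add: power_divide mult.commute flip: power_mult)
    ultimately show ?thesis by simp
  qed
  ultimately show ?thesis
    by (simp add: sum_gp_strict)
qed

lemma sum_PiE_omega_orthogonality:
  assumes "0 < p" "coprime t p" "finite K"
    and y: "y \<in> PiE K (\<lambda>_. {..<p})" and z: "z \<in> PiE K (\<lambda>_. {..<p})"
  shows "(\<Sum>a\<in>PiE K (\<lambda>_. {..<p}).
            omega p ^ (t * (\<Sum>i\<in>K. a i * y i)) / omega p ^ (t * (\<Sum>i\<in>K. a i * z i)))
           = (if y = z then of_nat p ^ card K else 0)"
proof -
  have summand: "omega p ^ (t * (\<Sum>i\<in>K. a i * y i)) / omega p ^ (t * (\<Sum>i\<in>K. a i * z i))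
      = (\<Prod>i\<in>K. (omega p ^ (t * y i) / omega p ^ (t * z i)) ^ a i)" for a
    by (simp add: sum_distrib_left power_sum prod_dividef power_divide flip: power_mult)
       (simp add: ac_simps)
  have "(\<Sum>a\<in>PiE K (\<lambda>_. {..<p}).
            omega p ^ (t * (\<Sum>i\<in>K. a i * y i)) / omega p ^ (t * (\<Sum>i\<in>K. a i * z i)))
      = (\<Prod>i\<in>K. \<Sum>j<p. (omega p ^ (t * y i) / omega p ^ (t * z i)) ^ j)"
    by (simp add: summand prod_sum_PiE[OF \<open>finite K\<close>])
  also have "\<dots> = (\<Prod>i\<in>K. if y i = z i then of_nat p else 0)"
    using y z by (intro prod.cong refl)
      (auto simp: sum_power_omega_ratio[OF assms(1,2)] dest: cong_less_modulus_unique_nat)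
  also have "\<dots> = (if y = z then of_nat p ^ card K else 0)"
    using y z \<open>finite K\<close> by (auto simp: prod_zero_iff intro: PiE_ext)
  finally show ?thesis .
qed

definition fourier_coeff ::
    "nat \<Rightarrow> nat \<Rightarrow> 'i set \<Rightarrow> (('i \<Rightarrow> nat) \<Rightarrow> nat) \<Rightarrow> ('i \<Rightarrow> nat) \<Rightarrow> ('i \<Rightarrow> nat) \<Rightarrow> complex"
  where "fourier_coeff p t K G z a =
    omega p ^ (t * G z) / omega p ^ (t * (\<Sum>i\<in>K. a i * z i)) / of_nat p ^ card K"

lemma norm_fourier_coeff: "norm (fourier_coeff p t K G z a) = 1 / real p ^ card K"
  by (simp add: fourier_coeff_def norm_divide norm_mult norm_power)

lemma omega_power_fourier_expansion:
  assumes "0 < p" "coprime t p" "finite K" and y: "y \<in> PiE K (\<lambda>_. {..<p})"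
  shows "omega p ^ (t * G y) =
    (\<Sum>z\<in>PiE K (\<lambda>_. {..<p}). \<Sum>a\<in>PiE K (\<lambda>_. {..<p}).
       fourier_coeff p t K G z a * omega p ^ (t * (\<Sum>i\<in>K. a i * y i)))"
proof -
  let ?A = "PiE K (\<lambda>_. {..<p})"
  have "(\<Sum>z\<in>?A. \<Sum>a\<in>?A. fourier_coeff p t K G z a * omega p ^ (t * (\<Sum>i\<in>K. a i * y i)))
      = (\<Sum>z\<in>?A. omega p ^ (t * G z) / of_nat p ^ card K *
           (\<Sum>a\<in>?A. omega p ^ (t * (\<Sum>i\<in>K. a i * y i)) / omega p ^ (t * (\<Sum>i\<in>K. a i * z i))))"
    by (simp add: fourier_coeff_def sum_distrib_left mult_ac)
  also have "\<dots> = (\<Sum>z\<in>?A. if z = y then omega p ^ (t * G z) else 0)"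
    using assms by (intro sum.cong refl) (auto simp: sum_PiE_omega_orthogonality)
  also have "\<dots> = omega p ^ (t * G y)"
    using y \<open>finite K\<close> by (simp add: finite_PiE)
  finally show ?thesis ..
qed

lemma bias_mod:
  assumes "0 < p"
  shows "bias p n t D (\<lambda>x. f x mod p) = bias p n t D f"
  using assms by (simp add: bias_def omega_power_mult_mod)

lemma bias_add_compose_eq_sum_fourier_coeff:
  assumes "0 < p" "coprime t p" "finite K"
    and Y: "\<And>x. x \<in> Fpn p n \<Longrightarrow> Y x \<in> PiE K (\<lambda>_. {..<p})"
  shows "bias p n t D (\<lambda>x. g x + G (Y x)) =
    (\<Sum>z\<in>PiE K (\<lambda>_. {..<p}). \<Sum>a\<in>PiE K (\<lambda>_. {..<p}).
       fourier_coeff p t K G z a * bias p n t D (\<lambda>x. g x + (\<Sum>i\<in>K. a i * Y x i)))"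
proof -
  let ?A = "PiE K (\<lambda>_. {..<p})"
  let ?W = "\<lambda>x. complex_of_real (\<Prod>i<n. D (x i)) * omega p ^ (t * g x)"
  have "bias p n t D (\<lambda>x. g x + G (Y x)) = (\<Sum>x\<in>Fpn p n. ?W x * omega p ^ (t * G (Y x)))"
    by (simp add: bias_def distrib_left power_add mult.assoc)
  also have "\<dots> = (\<Sum>x\<in>Fpn p n. ?W x * (\<Sum>z\<in>?A. \<Sum>a\<in>?A.
      fourier_coeff p t K G z a * omega p ^ (t * (\<Sum>i\<in>K. a i * Y x i))))"
    using Y by (intro sum.cong refl) (simp flip: omega_power_fourier_expansion[OF assms(1-3)])
  also have "\<dots> = (\<Sum>z\<in>?A. \<Sum>a\<in>?A. fourier_coeff p t K G z a *
      (\<Sum>x\<in>Fpn p n. ?W x * omega p ^ (t * (\<Sum>i\<in>K. a i * Y x i))))"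
    by (simp add: sum_distrib_left sum.swap[of _ "Fpn p n"] ac_simps)
  also have "\<dots> = (\<Sum>z\<in>?A. \<Sum>a\<in>?A.
       fourier_coeff p t K G z a * bias p n t D (\<lambda>x. g x + (\<Sum>i\<in>K. a i * Y x i)))"
    by (simp add: bias_def distrib_left power_add mult.assoc)
  finally show ?thesis .
qed

lemma norm_bias_add_compose_le:
  assumes "0 < p" "coprime t p" "finite K"
    and Y: "\<And>x. x \<in> Fpn p n \<Longrightarrow> Y x \<in> PiE K (\<lambda>_. {..<p})"
    and bound: "\<And>a. a \<in> PiE K (\<lambda>_. {..<p}) \<Longrightarrow>
      norm (bias p n t D (\<lambda>x. g x + (\<Sum>i\<in>K. a i * Y x i))) \<le> \<epsilon> / real p ^ card K"
  shows "norm (bias p n t D (\<lambda>x. g x + G (Y x))) \<le> \<epsilon>"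
proof -
  let ?A = "PiE K (\<lambda>_. {..<p})"
  have expansion: "bias p n t D (\<lambda>x. g x + G (Y x)) = (\<Sum>z\<in>?A. \<Sum>a\<in>?A.
      fourier_coeff p t K G z a * bias p n t D (\<lambda>x. g x + (\<Sum>i\<in>K. a i * Y x i)))"
    using assms(1-3) Y by (rule bias_add_compose_eq_sum_fourier_coeff)
  have "norm (bias p n t D (\<lambda>x. g x + G (Y x))) \<le>
      (\<Sum>z\<in>?A. \<Sum>a\<in>?A. norm (fourier_coeff p t K G z a) *
         norm (bias p n t D (\<lambda>x. g x + (\<Sum>i\<in>K. a i * Y x i))))"
    unfolding expansion
    by (intro order_trans[OF norm_sum] sum_mono) (simp add: order_trans[OF norm_sum] norm_mult)
  also have "\<dots> \<le> (\<Sum>z\<in>?A. \<Sum>a\<in>?A. 1 / real p ^ card K * (\<epsilon> / real p ^ card K))"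
    unfolding norm_fourier_coeff by (intro sum_mono mult_left_mono bound) simp_all
  also have "\<dots> = \<epsilon>"
    using \<open>0 < p\<close> \<open>finite K\<close> by (simp add: card_PiE)
  finally show ?thesis .
qed

theorem lemma2p10:
  fixes p n k :: nat and D :: "nat \<Rightarrow> real"
    and fs :: "nat \<Rightarrow> (nat \<Rightarrow> nat) \<Rightarrow> nat"
    and F :: "(nat \<Rightarrow> nat) \<Rightarrow> nat" and \<epsilon> :: real
  assumes "prime p"
    and "is_distr p D"
    and "\<And>i x. i \<le> k \<Longrightarrow> x \<in> Fpn p n \<Longrightarrow> fs i x < p"
    and "\<And>y. y \<in> PiE {1..k} (\<lambda>_. {..<p}) \<Longrightarrow> F y < p"
    and "\<epsilon> > 0"
    and "\<forall>t\<in>{1..<p}. \<forall>a\<in>PiE {1..k} (\<lambda>_. {..<p}).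
           norm (bias p n t D (\<lambda>x. (fs 0 x + (\<Sum>i\<in>{1..k}. a i * fs i x)) mod p))
             \<le> real p powr (- real k) * \<epsilon>"
  shows "\<forall>t\<in>{1..<p}.
           norm (bias p n t D (\<lambda>x. (fs 0 x + F (restrict (\<lambda>i. fs i x) {1..k})) mod p)) \<le> \<epsilon>"
proof
  fix t assume t: "t \<in> {1..<p}"
  have "0 < p"
    using \<open>prime p\<close> prime_gt_0_nat by blast
  have "coprime t p"
    using prime_imp_coprime[OF \<open>prime p\<close>, of t] t by (auto simp: coprime_commute nat_dvd_not_less)
  define Y where "Y x = restrict (\<lambda>i. fs i x) {1..k}" for x
  have "norm (bias p n t D (\<lambda>x. fs 0 x + F (Y x))) \<le> \<epsilon>"
  proof (rule norm_bias_add_compose_le[where K = "{1..k}" and Y = Y, OF \<open>0 < p\<close> \<open>coprime t p\<close>])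
    show "Y x \<in> PiE {1..k} (\<lambda>_. {..<p})" if "x \<in> Fpn p n" for x
      using assms(3) that by (auto simp: Y_def)
    fix a assume "a \<in> PiE {1..k} (\<lambda>_. {..<p})"
    then have "norm (bias p n t D (\<lambda>x. (fs 0 x + (\<Sum>i\<in>{1..k}. a i * fs i x)) mod p))
        \<le> real p powr (- real k) * \<epsilon>"
      using assms(6) t by blast
    then show "norm (bias p n t D (\<lambda>x. fs 0 x + (\<Sum>i\<in>{1..k}. a i * Y x i)))
        \<le> \<epsilon> / real p ^ card {1..k}"
      using \<open>0 < p\<close> by (simp add: bias_mod Y_def powr_minus powr_realpow divide_inverse mult.commute)
  qed simp
  then show "norm (bias p n t D (\<lambda>x. (fs 0 x + F (restrict (\<lambda>i. fs i x) {1..k})) mod p)) \<le> \<epsilon>"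
    using \<open>0 < p\<close> by (simp add: bias_mod Y_def)
qed

end
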